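(* Let $e>1$ be odd, $t\ge0$ an integer, $\mathbf c=(t+(1-e)/2,0)$ and $\mu=(\mu^1,\mu^2)$ a bipartition. Then the partition associated to the $1$-runner abacus $\mathfrak A_e(\mu,\mathbf c)=\{2j+e: j\in\mathfrak B(\mu,\mathbf c)^1\}\cup\{2j: j\in\mathfrak B(\mu,\mathbf c)^2\}$ equals $\Phi_t(\mu)$.
   Context: A $1$-runner abacus is a subset $\mathfrak A\subseteq\mathbb Z$ such that for some $n\ge1$, $-j\in\mathfrak A$ and $j\notin\mathfrak A$ for all $j\ge n$. List its elements $a_1>a_2>\cdots$; holes are elements of $\mathbb Z\setminus\mathfrak A$; $\lambda_j$ is the number of holes less than $a_j$, and $(\lambda_1,\lambda_2,\dots)$ is the partition associated to $\mathfrak A$; its charge is $a_1-\lambda_1$. For a bipartition $\mu$ and $\mathbf c=(c_1,c_2)\in\mathbb Z^2$ the symbol is $\mathfrak B(\mu,\mathbf c)=(\mathfrak B^1,\mathfrak B^2)$ with $\mathfrak B^i=\{\mu^i_j-j+c_i+1: j\ge1\}$ (parts $\mu^i_j=0$ beyond the length). $\Delta_t=(t,t-1,\dots,1)$. $2$-quotient convention: for a partition $\lambda$ take a $\beta$-set $B$ of $\lambda$ (the set $\{\lambda_i+N-i:1\le i\le N\}$, $N$ at least the number of parts) with $|B|$ odd, put $B^0=\{x/2:x\in B\text{ even}\}$, $B^1=\{(x-1)/2: x\in B\text{ odd}\}$, and $\lambda^{(2)}=(\text{partition with }\beta\text{-set }B^0,\ \text{partition with }\beta\text{-set }B^1)$.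 For $\lambda$ with $2$-core $\Delta_t$ and $\lambda^{(2)}=(\nu^1,\nu^2)$, $\bar\lambda^{(2)}=(\nu^1,\nu^2)$ if $t$ is even and $(\nu^2,\nu^1)$ if $t$ is odd. $\Phi_t(\mu)$ is the unique partition $\lambda$ with $2$-core $\Delta_t$ and $\bar\lambda^{(2)}=\mu$. *)

theory Defs
  imports Main
begin

definition is_partition :: "nat list \<Rightarrow> bool" where
  "is_partition lam \<longleftrightarrow> sorted_wrt (\<ge>) lam \<and> 0 \<notin> set lam"

definition part :: "nat list \<Rightarrow> nat \<Rightarrow> nat" where
  "part lam j = (if 1 \<le> j \<and> j \<le> length lam then lam ! (j - 1) else 0)"

definition is_bipartition :: "nat list \<times> nat list \<Rightarrow> bool" where
  "is_bipartition mu \<longleftrightarrow> is_partition (fst mu) \<and> is_partition (snd mu)"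

definition is_abacus :: "int set \<Rightarrow> bool" where
  "is_abacus A \<longleftrightarrow> (\<exists>n::int\<ge>1. \<forall>j\<ge>n. -j \<in> A \<and> j \<notin> A)"

definition abacus_elem :: "int set \<Rightarrow> nat \<Rightarrow> int" where
  "abacus_elem A j = (THE a. a \<in> A \<and> card {b \<in> A. a < b} = j - 1)"

definition abacus_part :: "int set \<Rightarrow> nat \<Rightarrow> nat" where
  "abacus_part A j = card {h. h \<notin> A \<and> h < abacus_elem A j}"

definition symbol_comp :: "nat list \<Rightarrow> int \<Rightarrow> int set" where
  "symbol_comp nu c = {int (part nu j) - int j + c + 1 | j. j \<ge> 1}"

definition symbol :: "nat list \<times> nat list \<Rightarrow> int \<times> int \<Rightarrow> int set \<times> int set" where
  "symbol mu c = (symbol_comp (fst mu) (fst c), symbol_comp (snd mu) (snd c))"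

definition abacus_e :: "int \<Rightarrow> nat list \<times> nat list \<Rightarrow> int \<times> int \<Rightarrow> int set" where
  "abacus_e e mu c =
     {2 * j + e | j. j \<in> fst (symbol mu c)} \<union> {2 * j | j. j \<in> snd (symbol mu c)}"

definition beta :: "nat \<Rightarrow> nat list \<Rightarrow> nat set" where
  "beta N lam = {part lam i + N - i | i. 1 \<le> i \<and> i \<le> N}"

definition staircase :: "nat \<Rightarrow> nat list" where
  "staircase t = rev [1..<t+1]"

text \<open>Removal of a rim 2-hook (domino) from lam giving kappa, expressed on
  beta-sets: some bead x is moved to the free position x-2.\<close>
definition remove_domino :: "nat list \<Rightarrow> nat list \<Rightarrow> bool" where
  "remove_domino lam kappa \<longleftrightarrow> is_partition lam \<and> is_partition kappa \<and>
     (\<exists>N. length lam \<le> N \<and> length kappa \<le> N \<and>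
        (\<exists>x \<in> beta N lam. 2 \<le> x \<and> x - 2 \<notin> beta N lam \<and>
           beta N kappa = insert (x - 2) (beta N lam - {x})))"

definition has_2core :: "nat list \<Rightarrow> nat list \<Rightarrow> bool" where
  "has_2core lam kappa \<longleftrightarrow> remove_domino\<^sup>*\<^sup>* lam kappa \<and> (\<nexists>k. remove_domino kappa k)"

definition partition_of_beta :: "nat set \<Rightarrow> nat list" where
  "partition_of_beta S =
     (THE nu. is_partition nu \<and> length nu \<le> card S \<and> beta (card S) nu = S)"

definition quot2 :: "nat list \<Rightarrow> nat list \<times> nat list" where
  "quot2 lam = (let B = beta (2 * length lam + 1) lam in
     (partition_of_beta {x div 2 | x. x \<in> B \<and> even x},
      partition_of_beta {(x - 1) div 2 | x. x \<in> B \<and> odd x}))"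

definition quot2_bar :: "nat \<Rightarrow> nat list \<Rightarrow> nat list \<times> nat list" where
  "quot2_bar t lam = (if even t then quot2 lam else prod.swap (quot2 lam))"

definition Phi :: "nat \<Rightarrow> nat list \<times> nat list \<Rightarrow> nat list" where
  "Phi t mu = (THE lam. is_partition lam \<and> has_2core lam (staircase t) \<and> quot2_bar t lam = mu)"

end

theory Submission
  imports Defs
begin

text \<open>Encode a partition \<open>\<lambda>\<close> by its abacus of charge \<open>c\<close>, the bead positions
  \<open>\<lambda>\<^sub>i - i + c\<close>; the partition associated to such an abacus is \<open>\<lambda>\<close> again. Splitting
  the charge-\<open>0\<close> abacus into odd and even positions exhibits it as the interleaving of
  the abaci of the two components of the \<open>2\<close>-quotient, with charges \<open>-k\<close> and \<open>k\<close>.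
  Removing a domino moves one bead two steps down, which preserves \<open>k\<close>, and no domino
  can be removed exactly when both quotient components are empty; so \<open>\<lambda>\<close> has \<open>2\<close>-core
  \<open>\<Delta>\<^sub>t\<close> iff \<open>k\<close> is the charge of \<open>\<Delta>\<^sub>t\<close>. For \<open>\<lambda> = \<Phi>\<^sub>t(\<mu>)\<close>, shifting the charge
  to \<open>t + 2\<close> then places \<open>\<mu>\<^sup>1\<close> with charge \<open>t + 1\<close> on the odd and \<open>\<mu>\<^sup>2\<close> with charge
  \<open>1\<close> on the even positions, which is precisely the abacus \<open>\<AA>\<^sub>e(\<mu>, c)\<close>.\<close>

section \<open>Partitions and their abaci\<close>

lemma part_eq_0: "length lam < i \<Longrightarrow> part lam i = 0"
  by (simp add: part_def)

lemma part_antimono: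
  assumes "is_partition lam" "1 \<le> i" "i \<le> j"
  shows "part lam j \<le> part lam i"
proof (cases "i < j \<and> j \<le> length lam")
  case True
  have "sorted_wrt (\<ge>) lam" using assms(1) by (simp add: is_partition_def)
  moreover have "i - 1 < j - 1" "j - 1 < length lam" using True assms(2) by auto
  ultimately have "lam ! (j - 1) \<le> lam ! (i - 1)" by (simp add: sorted_wrt_iff_nth_less)
  then show ?thesis using True assms(2) by (simp add: part_def)
qed (use assms in \<open>auto simp: part_def\<close>)

lemma part_pos:
  assumes "is_partition lam" "1 \<le> i" "i \<le> length lam"
  shows "0 < part lam i"
proof -
  have "lam ! (i - 1) \<in> set lam" using assms(2,3) by simp
  then have "lam ! (i - 1) \<noteq> 0" using assms(1) unfolding is_partition_def by metis
  then show ?thesis using assms(2,3) by (simp add: part_def)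
qed

lemma length_le_if_part_eq:
  assumes "is_partition lam" "\<And>j. 1 \<le> j \<Longrightarrow> part lam j = part lam' j"
  shows "length lam \<le> length lam'"
proof (rule ccontr)
  assume "\<not> length lam \<le> length lam'"
  then have "1 \<le> length lam" "part lam' (length lam) = 0" "0 < part lam (length lam)"
    using part_eq_0 part_pos[OF assms(1)] by auto
  then show False using assms(2)[of "length lam"] by simp
qed

lemma partition_eqI:
  assumes "is_partition lam" "is_partition lam'" "\<And>j. 1 \<le> j \<Longrightarrow> part lam j = part lam' j"
  shows "lam = lam'"
proof -
  have len: "length lam = length lam'"
    using length_le_if_part_eq assms by (metis le_antisym)
  show ?thesis
  proof (rule nth_equalityI[OF len])
    fix i assume "i < length lam"
    then show "lam ! i = lam' ! i" using assms(3)[of "Suc i"] len by (simp add: part_def)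
  qed
qed

lemma sum_part_eq_sum_list:
  assumes "length lam \<le> N"
  shows "(\<Sum>i = 1..N. part lam i) = sum_list lam"
proof -
  have "(\<Sum>i = 1..N. part lam i) = (\<Sum>i < N. part lam (Suc i))"
    by (simp add: sum.atLeast1_atMost_eq)
  also have "\<dots> = (\<Sum>i < length lam. lam ! i)"
    using assms by (intro sum.mono_neutral_cong_right) (auto simp: part_def)
  finally show ?thesis by (simp add: sum_list_sum_nth atLeast0LessThan)
qed

text \<open>In the notation of the paper, \<open>symbol_comp \<nu> c = abacus_of \<nu> (c + 1)\<close>.\<close>

definition bead :: "nat list \<Rightarrow> int \<Rightarrow> nat \<Rightarrow> int" where
  "bead lam c i = int (part lam i) - int i + c"

definition abacus_of :: "nat list \<Rightarrow> int \<Rightarrow> int set" where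
  "abacus_of lam c = bead lam c ` {1..}"

lemma bead_strict_antimono:
  assumes "is_partition lam" "1 \<le> i" "i < j"
  shows "bead lam c j < bead lam c i"
  using part_antimono[OF assms(1,2), of j] assms(3) by (simp add: bead_def)

lemma bead_antimono:
  assumes "is_partition lam" "1 \<le> i" "i \<le> j"
  shows "bead lam c j \<le> bead lam c i"
  using part_antimono[OF assms] assms(3) by (simp add: bead_def)

lemma bead_less_iff:
  assumes "is_partition lam" "1 \<le> i" "1 \<le> j"
  shows "bead lam c j < bead lam c i \<longleftrightarrow> i < j"
  using bead_strict_antimono[OF assms(1,2)] bead_strict_antimono[OF assms(1,3)]
  by (metis less_asym linorder_neqE_nat)

lemma inj_on_bead: "is_partition lam \<Longrightarrow> inj_on (bead lam c) {1..}"
  by (rule inj_onI) (metis atLeast_iff bead_less_iff less_irrefl linorder_neqE_nat)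

lemma bead_beyond_length: "length lam < i \<Longrightarrow> bead lam c i = c - int i"
  by (simp add: bead_def part_eq_0)

lemma bead_lower_bound: "c - int i \<le> bead lam c i"
  by (simp add: bead_def)

lemma abacus_of_shift: "(\<lambda>z. z + d) ` abacus_of lam c = abacus_of lam (c + d)"
  by (simp add: abacus_of_def bead_def image_image add.assoc)

lemma mem_abacus_of_shift: "z \<in> abacus_of lam c \<longleftrightarrow> z - c \<in> abacus_of lam 0"
proof -
  have "abacus_of lam c = (\<lambda>z. z + c) ` abacus_of lam 0" using abacus_of_shift[of c lam 0] by simp
  then show ?thesis by (auto simp: image_iff intro: bexI[where x = "z - c"])
qed

lemma mem_abacus_of_below: "z < c - int (length lam) \<Longrightarrow> z \<in> abacus_of lam c"
  unfolding abacus_of_def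
  by (rule image_eqI[of _ _ "nat (c - z)"]) (auto simp: bead_beyond_length)

lemma abacus_of_Nil: "abacus_of [] c = {z. z < c}"
  using mem_abacus_of_below[of _ c "[]"] by (auto simp: abacus_of_def bead_def part_def)

lemma card_bead_image:
  "is_partition lam \<Longrightarrow> A \<subseteq> {1..} \<Longrightarrow> card (bead lam c ` A) = card A"
  by (metis card_image inj_on_bead inj_on_subset)

lemma beads_above:
  assumes "is_partition lam" "1 \<le> j"
  shows "{b \<in> abacus_of lam c. bead lam c j < b} = bead lam c ` {1..<j}"
  using bead_less_iff[OF assms(1) _ assms(2)] assms(2) by (auto simp: abacus_of_def)

lemma abacus_elem_abacus_of:
  assumes "is_partition lam" "1 \<le> j"
  shows "abacus_elem (abacus_of lam c) j = bead lam c j"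
  unfolding abacus_elem_def
proof (rule the_equality)
  show "bead lam c j \<in> abacus_of lam c \<and> card {b \<in> abacus_of lam c. bead lam c j < b} = j - 1"
    using assms card_bead_image[OF assms(1), of "{1..<j}" c] beads_above[OF assms, of c]
    by (simp add: abacus_of_def subset_eq)
next
  fix a assume a: "a \<in> abacus_of lam c \<and> card {b \<in> abacus_of lam c. a < b} = j - 1"
  then obtain i where i: "1 \<le> i" "a = bead lam c i" by (auto simp: abacus_of_def)
  then have "i - 1 = j - 1"
    using a card_bead_image[OF assms(1), of "{1..<i}" c] by (simp add: beads_above[OF assms(1)] subset_eq)
  then have "i = j" using i(1) assms(2) by linarith
  then show "a = bead lam c j" using i by simp
qed

lemma holes_below_bead:
  assumes "is_partition lam" "1 \<le> j" "length lam \<le> M" "j \<le> M"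
  shows "{h. h \<notin> abacus_of lam c \<and> h < bead lam c j}
    = {c - int M ..< bead lam c j} - bead lam c ` {j<..M}"
proof -
  have occupied: "h \<in> abacus_of lam c \<longleftrightarrow> h \<in> bead lam c ` {j<..M}"
    if "c - int M \<le> h" "h < bead lam c j" for h
  proof
    assume "h \<in> abacus_of lam c"
    then obtain i where i: "1 \<le> i" "h = bead lam c i" by (auto simp: abacus_of_def)
    have "j < i" using bead_less_iff[OF assms(1,2) i(1)] i(2) that(2) by simp
    moreover have "i \<le> M"
      using bead_beyond_length[of lam i c] assms(3) i(2) that(1) by (cases "M < i") auto
    ultimately show "h \<in> bead lam c ` {j<..M}" using i(2) by simp
  next
    assume "h \<in> bead lam c ` {j<..M}"
    then show "h \<in> abacus_of lam c" using assms(2) by (auto simp: abacus_of_def)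
  qed
  have below: "h \<in> abacus_of lam c" if "h < c - int M" for h
    using mem_abacus_of_below that assms(3) by simp
  have range: "c - int M \<le> bead lam c i \<and> bead lam c i < bead lam c j" if "j < i" "i \<le> M" for i
    using bead_lower_bound[of c i lam] bead_strict_antimono[OF assms(1,2) that(1)] that(2) by simp
  show ?thesis
  proof (intro set_eqI)
    fix h
    show "h \<in> {h. h \<notin> abacus_of lam c \<and> h < bead lam c j}
      \<longleftrightarrow> h \<in> {c - int M ..< bead lam c j} - bead lam c ` {j<..M}"
      using occupied[of h] below[of h] range by (cases "c - int M \<le> h") auto
  qed
qed

lemma abacus_part_abacus_of:
  assumes "is_partition lam" "1 \<le> j"
  shows "abacus_part (abacus_of lam c) j = part lam j"
proof -
  define M where "M = max (length lam) j"
  have sub: "bead lam c ` {j<..M} \<subseteq> {c - int M ..< bead lam c j}"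
  proof clarsimp
    fix i assume "j < i" "i \<le> M"
    then show "c - int M \<le> bead lam c i \<and> bead lam c i < bead lam c j"
      using bead_lower_bound[of c i lam] bead_strict_antimono[OF assms] by simp
  qed
  have "abacus_part (abacus_of lam c) j = card ({c - int M ..< bead lam c j} - bead lam c ` {j<..M})"
    unfolding abacus_part_def abacus_elem_abacus_of[OF assms]
    using holes_below_bead[OF assms, of M c] M_def by simp
  also have "\<dots> = nat (bead lam c j - (c - int M)) - (M - j)"
    using sub card_bead_image[OF assms(1), of "{j<..M}"] assms(2)
    by (simp add: card_Diff_subset finite_subset subset_eq)
  also have "\<dots> = part lam j" unfolding bead_def M_def by auto
  finally show ?thesis .
qed

lemma abacus_of_inj:
  assumes "is_partition lam" "is_partition lam'" "abacus_of lam c = abacus_of lam' c'"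
  shows "lam = lam'" "c = c'"
proof -
  show "lam = lam'"
    using partition_eqI[OF assms(1,2)] abacus_part_abacus_of assms by metis
  moreover have "bead lam c 1 = bead lam' c' 1"
    using abacus_elem_abacus_of[of _ 1] assms by (metis order_refl)
  ultimately show "c = c'" by (simp add: bead_def)
qed

lemma card_abacus_of_ge:
  assumes "is_partition lam" "int (length lam) \<le> M + c"
  shows "finite {z \<in> abacus_of lam c. - M \<le> z}" "card {z \<in> abacus_of lam c. - M \<le> z} = nat (M + c)"
proof -
  have bound: "- M \<le> bead lam c i \<longleftrightarrow> i \<le> nat (M + c)" for i
  proof (cases "length lam < i")
    case True
    have "i \<le> nat (M + c) \<longleftrightarrow> int i \<le> M + c" using assms(2) by (intro le_nat_iff) simp
    moreover have "- M \<le> c - int i \<longleftrightarrow> int i \<le> M + c" by (intro iffI) linarith+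
    ultimately show ?thesis unfolding bead_beyond_length[OF True] by (simp only:)
  next
    case False
    then have "int i \<le> M + c" using assms(2) by linarith
    then have "i \<le> nat (M + c)" "- M \<le> bead lam c i"
      using bead_lower_bound[of c i lam] by linarith+
    then show ?thesis by simp
  qed
  have "{i. 1 \<le> i \<and> - M \<le> bead lam c i} = {0<..nat (M + c)}"
    using bound by (simp add: set_eq_iff Suc_le_eq)
  moreover have "{z \<in> abacus_of lam c. - M \<le> z} = bead lam c ` {i. 1 \<le> i \<and> - M \<le> bead lam c i}"
    unfolding abacus_of_def by auto
  ultimately have "{z \<in> abacus_of lam c. - M \<le> z} = bead lam c ` {0<..nat (M + c)}" by simp
  then show "finite {z \<in> abacus_of lam c. - M \<le> z}" "card {z \<in> abacus_of lam c. - M \<le> z} = nat (M + c)"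
    using card_bead_image[OF assms(1), of "{0<..nat (M + c)}"] by (simp_all add: subset_eq)
qed

text \<open>Closure under moving beads one step down makes the abacus full below its top bead,
  i.e. the abacus of the empty partition.\<close>

lemma abacus_of_down_closed_Nil:
  assumes "is_partition lam" "\<And>z. z \<in> abacus_of lam c \<Longrightarrow> z - 1 \<in> abacus_of lam c"
  shows "lam = []"
proof -
  define a where "a = bead lam c 1"
  have down: "a - int n \<in> abacus_of lam c" for n
  proof (induction n)
    case 0 show ?case unfolding a_def abacus_of_def by simp
  next
    case (Suc n)
    show ?case using assms(2)[OF Suc] by (simp add: algebra_simps)
  qed
  have "z \<in> abacus_of lam c" if "z < a + 1" for z
    using down[of "nat (a - z)"] that by simp
  then have "{z. z < a + 1} \<subseteq> abacus_of lam c" by blast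
  moreover have "abacus_of lam c \<subseteq> {z. z < a + 1}"
  proof
    fix z assume "z \<in> abacus_of lam c"
    then obtain i where "1 \<le> i" "z = bead lam c i" by (auto simp: abacus_of_def)
    then show "z \<in> {z. z < a + 1}" using bead_antimono[OF assms(1), of 1 i c] a_def by simp
  qed
  ultimately have "abacus_of lam c = abacus_of [] (a + 1)" unfolding abacus_of_Nil by (rule subset_antisym[rotated])
  moreover have "is_partition []" by (simp add: is_partition_def)
  ultimately show ?thesis using abacus_of_inj(1)[OF assms(1)] by blast
qed

lemma beta_eq_image: "beta N lam = (\<lambda>i. part lam i + N - i) ` {1..N}"
  unfolding beta_def by auto

lemma finite_beta [simp]: "finite (beta N lam)"
  by (simp add: beta_eq_image)

lemma card_beta:
  assumes "is_partition lam"
  shows "card (beta N lam) = N"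
proof -
  have "inj_on (\<lambda>i. part lam i + N - i) {1..N}"
  proof (rule inj_onI)
    fix i j assume ij: "i \<in> {1..N}" "j \<in> {1..N}" "part lam i + N - i = part lam j + N - j"
    then have "bead lam 0 i = bead lam 0 j" unfolding bead_def by auto
    then show "i = j" using inj_onD[OF inj_on_bead[OF assms]] ij by simp
  qed
  then show ?thesis by (simp add: beta_eq_image card_image)
qed

lemma sum_beta:
  assumes "is_partition lam" "length lam \<le> N"
  shows "\<Sum>(beta N lam) = sum_list lam + (\<Sum>i = 1..N. N - i)"
proof -
  have "inj_on (\<lambda>i. part lam i + N - i) {1..N}"
    using card_beta[OF assms(1), of N] by (simp add: beta_eq_image eq_card_imp_inj_on)
  then have "\<Sum>(beta N lam) = (\<Sum>i = 1..N. part lam i + N - i)"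
    by (simp add: beta_eq_image sum.reindex)
  also have "\<dots> = (\<Sum>i = 1..N. part lam i) + (\<Sum>i = 1..N. N - i)"
    unfolding sum.distrib[symmetric] by (rule sum.cong) auto
  finally show ?thesis unfolding sum_part_eq_sum_list[OF assms(2)] .
qed

text \<open>A \<open>\<beta>\<close>-set with \<open>N\<close> beads is the part of the charge-\<open>0\<close> abacus above \<open>-N\<close>,
  shifted up by \<open>N\<close>.\<close>

lemma mem_abacus_of_beta:
  assumes "length lam \<le> N"
  shows "z \<in> abacus_of lam c \<longleftrightarrow> z - c < - int N \<or> (- int N \<le> z - c \<and> nat (z - c + int N) \<in> beta N lam)"
proof -
  have "y \<in> abacus_of lam 0 \<longleftrightarrow> y < - int N \<or> (- int N \<le> y \<and> nat (y + int N) \<in> beta N lam)" for y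
  proof
    assume "y \<in> abacus_of lam 0"
    then obtain i where i: "1 \<le> i" "y = int (part lam i) - int i" by (auto simp: abacus_of_def bead_def)
    show "y < - int N \<or> (- int N \<le> y \<and> nat (y + int N) \<in> beta N lam)"
    proof (cases "i \<le> N")
      case True
      then have "nat (y + int N) = part lam i + N - i" using i by simp
      then show ?thesis using True i unfolding beta_def by auto
    next
      case False
      then show ?thesis using i assms part_eq_0[of lam i] by simp
    qed
  next
    assume y: "y < - int N \<or> (- int N \<le> y \<and> nat (y + int N) \<in> beta N lam)"
    show "y \<in> abacus_of lam 0"
    proof (cases "y < - int N")
      case True then show ?thesis using mem_abacus_of_below[of y 0 lam] assms by simp
    next
      case False
      then obtain i where "1 \<le> i" "i \<le> N" "nat (y + int N) = part lam i + N - i"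
        using y unfolding beta_def by auto
      then have "y = bead lam 0 i" "1 \<le> i" using False by (auto simp: bead_def)
      then show ?thesis by (auto simp: abacus_of_def)
    qed
  qed
  then show ?thesis using mem_abacus_of_shift[of z lam c] by simp
qed

lemma beta_inj:
  assumes "is_partition lam" "is_partition lam'" "length lam \<le> N" "length lam' \<le> N"
    "beta N lam = beta N lam'"
  shows "lam = lam'"
proof -
  have "abacus_of lam 0 = abacus_of lam' 0"
    using mem_abacus_of_beta[OF assms(3)] mem_abacus_of_beta[OF assms(4)] assms(5) by blast
  then show ?thesis using abacus_of_inj(1)[OF assms(1,2)] by blast
qed

lemma beta_Suc_Cons:
  "beta (Suc N) (d # lam) = insert (d + N) (beta N lam)"
proof -
  have "(\<lambda>i. part (d # lam) i + Suc N - i) ` {2..Suc N}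
      = (\<lambda>i. part (d # lam) (Suc i) + Suc N - Suc i) ` {1..N}"
    by (simp only: image_Suc_atLeastAtMost[symmetric] image_image numeral_2_eq_2 One_nat_def)
  also have "\<dots> = (\<lambda>i. part lam i + N - i) ` {1..N}"
    by (rule image_cong) (auto simp: part_def)
  finally have "(\<lambda>i. part (d # lam) i + Suc N - i) ` {2..Suc N} = (\<lambda>i. part lam i + N - i) ` {1..N}" .
  moreover have "{1..Suc N} = insert 1 {2..Suc N}" by auto
  ultimately show ?thesis by (simp add: beta_eq_image part_def)
qed

lemma beta_Suc_Nil: "beta (Suc N) [] = insert N (beta N [])"
proof -
  have "part [0] = part []" by (auto simp: part_def)
  then have "beta (Suc N) [] = beta (Suc N) [0]" by (simp add: beta_def)
  then show ?thesis using beta_Suc_Cons[where d = 0 and N = N and lam = "[]"] by simp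
qed

text \<open>The largest element \<open>m\<close> of \<open>S\<close> contributes the first part \<open>m - N\<close>.\<close>

lemma ex_partition_beta:
  "finite S \<Longrightarrow> card S = N \<Longrightarrow> \<exists>lam. is_partition lam \<and> length lam \<le> N \<and> beta N lam = S"
proof (induction N arbitrary: S)
  case 0
  then show ?case by (intro exI[of _ "[]"]) (simp add: is_partition_def beta_def)
next
  case (Suc N)
  define m where "m = Max S"
  have "S \<noteq> {}" using Suc.prems by auto
  then have m: "m \<in> S" "\<And>x. x \<in> S - {m} \<Longrightarrow> x < m"
    using Suc.prems Max_ge[OF Suc.prems(1)] unfolding m_def by (auto simp: le_less)
  obtain lam where lam: "is_partition lam" "length lam \<le> N" "beta N lam = S - {m}"
    using Suc.IH[of "S - {m}"] Suc.prems m(1) by auto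
  have "S \<subseteq> {0..m}" using m by (auto simp: le_less)
  then have "N \<le> m" using card_mono[of "{0..m}" S] Suc.prems by simp
  have first: "part lam 1 \<le> m - N"
  proof (cases "lam = []")
    case False
    then have "part lam 1 + N - 1 \<in> S - {m}"
      using lam(2,3) unfolding beta_def by (cases lam) force+
    then have "part lam 1 + N - 1 < m" using m(2) by blast
    then show ?thesis using lam(2) False by (cases lam) (auto simp: part_def)
  qed (simp add: part_def)
  show ?case
  proof (cases "m = N")
    case True
    then have "lam = []" using first part_pos[OF lam(1), of 1] by (cases lam) auto
    then have "beta (Suc N) [] = S"
      using beta_Suc_Nil lam(3) m(1) True by (simp add: insert_absorb)
    then show ?thesis using lam(1) \<open>lam = []\<close> by auto
  next
    case False
    have "beta (Suc N) ((m - N) # lam) = S"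
      using beta_Suc_Cons[where d = "m - N" and N = N and lam = lam] lam(3) m(1) \<open>N \<le> m\<close>
      by (simp add: insert_absorb)
    moreover have "x \<le> m - N" if "x \<in> set lam" for x
    proof -
      obtain k where "k < length lam" "x = lam ! k" using \<open>x \<in> set lam\<close> by (auto simp: in_set_conv_nth)
      then have "x = part lam (Suc k)" by (simp add: part_def)
      then show ?thesis using part_antimono[OF lam(1), of 1 "Suc k"] first by simp
    qed
    then have "is_partition ((m - N) # lam)"
      using lam(1) False \<open>N \<le> m\<close> unfolding is_partition_def by auto
    ultimately show ?thesis using lam(2) by (intro exI[of _ "(m - N) # lam"]) simp
  qed
qed

lemma partition_of_beta_spec:
  assumes "finite S"
  shows "is_partition (partition_of_beta S)" "length (partition_of_beta S) \<le> card S"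
    "beta (card S) (partition_of_beta S) = S"
proof -
  have "\<exists>!lam. is_partition lam \<and> length lam \<le> card S \<and> beta (card S) lam = S"
    using ex_partition_beta[OF assms refl] beta_inj by metis
  then show "is_partition (partition_of_beta S)" "length (partition_of_beta S) \<le> card S"
    "beta (card S) (partition_of_beta S) = S"
    unfolding partition_of_beta_def by (metis (mono_tags, lifting) theI')+
qed

lemma mem_abacus_of_partition_of_beta:
  assumes "finite X"
  shows "w \<in> abacus_of (partition_of_beta X) c
    \<longleftrightarrow> w - c < - int (card X) \<or> (- int (card X) \<le> w - c \<and> nat (w - c + int (card X)) \<in> X)"
  using mem_abacus_of_beta[OF partition_of_beta_spec(2)[OF assms]] partition_of_beta_spec(3)[OF assms]
  by simp

lemma ex_partition_abacus_of:
  assumes "{z. z < - int N} \<subseteq> X" "finite {z \<in> X. - int N \<le> z}" "card {z \<in> X. - int N \<le> z} = N"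
  shows "\<exists>lam. is_partition lam \<and> abacus_of lam 0 = X"
proof -
  define T where "T = {z \<in> X. - int N \<le> z}"
  have inj: "inj_on (\<lambda>z. nat (z + int N)) T" unfolding T_def inj_on_def by auto
  then obtain lam where lam: "is_partition lam" "length lam \<le> N" "beta N lam = (\<lambda>z. nat (z + int N)) ` T"
    using ex_partition_beta[of "(\<lambda>z. nat (z + int N)) ` T" N] assms(2,3) unfolding T_def
    by (auto simp: card_image)
  have "z \<in> abacus_of lam 0 \<longleftrightarrow> z \<in> X" for z
  proof (cases "z < - int N")
    case False
    have "nat (z + int N) \<in> (\<lambda>z. nat (z + int N)) ` T \<longleftrightarrow> z \<in> T"
    proof
      assume "nat (z + int N) \<in> (\<lambda>z. nat (z + int N)) ` T"
      then obtain z' where "z' \<in> T" "nat (z' + int N) = nat (z + int N)" by auto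
      moreover have "- int N \<le> z'" using \<open>z' \<in> T\<close> unfolding T_def by simp
      ultimately show "z \<in> T" using False by (simp add: eq_nat_nat_iff)
    qed simp
    then show ?thesis using mem_abacus_of_beta[OF lam(2), of z 0] lam(3) False by (simp add: T_def)
  qed (use assms(1) mem_abacus_of_beta[OF lam(2), of z 0] in auto)
  then show ?thesis using lam(1) by blast
qed

section \<open>Interleaving two abaci\<close>

definition interleave :: "nat list \<Rightarrow> int \<Rightarrow> nat list \<Rightarrow> int \<Rightarrow> int set" where
  "interleave a ca b cb = (\<lambda>z. 2 * z + 1) ` abacus_of a ca \<union> (\<lambda>z. 2 * z) ` abacus_of b cb"

lemma odd_mem_interleave: "2 * z + 1 \<in> interleave a ca b cb \<longleftrightarrow> z \<in> abacus_of a ca"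
  unfolding interleave_def by auto presburger

lemma even_mem_interleave: "2 * z \<in> interleave a ca b cb \<longleftrightarrow> z \<in> abacus_of b cb"
  unfolding interleave_def by auto presburger

lemma interleave_inj:
  assumes "is_partition a" "is_partition b" "is_partition a'" "is_partition b'"
    and "interleave a ca b cb = interleave a' ca' b' cb'"
  shows "a = a'" "ca = ca'" "b = b'" "cb = cb'"
proof -
  have "abacus_of a ca = abacus_of a' ca'" using odd_mem_interleave assms(5) by blast
  then show "a = a'" "ca = ca'" using abacus_of_inj assms(1,3) by blast+
  have "abacus_of b cb = abacus_of b' cb'" using even_mem_interleave assms(5) by blast
  then show "b = b'" "cb = cb'" using abacus_of_inj assms(2,4) by blast+
qed

lemma interleave_shift_even:
  "(\<lambda>z. z + 2 * d) ` interleave a ca b cb = interleave a (ca + d) b (cb + d)"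
  unfolding interleave_def abacus_of_shift[symmetric] image_Un image_image
  by (simp add: algebra_simps)

lemma interleave_shift_odd:
  "(\<lambda>z. z + 1) ` interleave a ca b cb = interleave b cb a (ca + 1)"
  unfolding interleave_def abacus_of_shift[symmetric] image_Un image_image
  by (simp add: algebra_simps Un_commute)

lemma abacus_e_eq_interleave:
  assumes "odd e"
  shows "abacus_e e mu (c1, c2) = interleave (fst mu) (c1 + (e + 1) div 2) (snd mu) (c2 + 1)"
proof -
  obtain f where f: "e = 2 * f + 1" using assms by (auto elim: oddE)
  have "symbol_comp lam c = abacus_of lam (c + 1)" for lam c
    by (auto simp: symbol_comp_def abacus_of_def bead_def)
  then have "abacus_e e mu (c1, c2)
      = (\<lambda>z. 2 * z + e) ` abacus_of (fst mu) (c1 + 1) \<union> (\<lambda>z. 2 * z) ` abacus_of (snd mu) (c2 + 1)"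
    unfolding abacus_e_def symbol_def by auto
  also have "(\<lambda>z. 2 * z + e) ` abacus_of (fst mu) (c1 + 1) = (\<lambda>z. 2 * z + 1) ` abacus_of (fst mu) (c1 + 1 + f)"
    unfolding abacus_of_shift[symmetric] image_image f by (simp add: algebra_simps)
  finally show ?thesis using f by (simp add: interleave_def algebra_simps)
qed

lemma card_interleave_ge:
  assumes "is_partition a" "is_partition b" "int (length a) \<le> M + ca" "int (length b) \<le> M + cb"
  shows "finite {z \<in> interleave a ca b cb. - (2 * M) \<le> z}"
    "card {z \<in> interleave a ca b cb. - (2 * M) \<le> z} = nat (M + ca) + nat (M + cb)"
proof -
  define Ta where "Ta = {w \<in> abacus_of a ca. - M \<le> w}"
  define Tb where "Tb = {w \<in> abacus_of b cb. - M \<le> w}"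
  note count = card_abacus_of_ge[OF assms(1,3)] card_abacus_of_ge[OF assms(2,4)]
  have T: "{z \<in> interleave a ca b cb. - (2 * M) \<le> z} = (\<lambda>w. 2 * w + 1) ` Ta \<union> (\<lambda>w. 2 * w) ` Tb"
    unfolding interleave_def Ta_def Tb_def by auto
  have "2 * w + 1 \<noteq> 2 * w' " for w w' :: int by presburger
  then have "card ((\<lambda>w. 2 * w + 1) ` Ta \<union> (\<lambda>w. 2 * w) ` Tb) = card Ta + card Tb"
    using count unfolding Ta_def[symmetric] Tb_def[symmetric]
    by (subst card_Un_disjoint) (auto simp: card_image inj_on_def)
  then show "card {z \<in> interleave a ca b cb. - (2 * M) \<le> z} = nat (M + ca) + nat (M + cb)"
    using count unfolding T Ta_def Tb_def by simp
  show "finite {z \<in> interleave a ca b cb. - (2 * M) \<le> z}"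
    using count unfolding T Ta_def Tb_def by simp
qed

lemma mem_interleave_below:
  assumes "z < 2 * (ca - int (length a))" "z < 2 * (cb - int (length b))"
  shows "z \<in> interleave a ca b cb"
proof (cases "even z")
  case True
  then obtain w where w: "z = 2 * w" by (auto elim: evenE)
  have "w < cb - int (length b)" using assms(2) unfolding w by simp
  then show ?thesis unfolding w even_mem_interleave by (rule mem_abacus_of_below)
next
  case False
  then obtain w where w: "z = 2 * w + 1" by (auto elim: oddE)
  have "w < ca - int (length a)" using assms(1) unfolding w by simp
  then show ?thesis unfolding w odd_mem_interleave by (rule mem_abacus_of_below)
qed

lemma ex_partition_abacus_of_interleave:
  assumes "is_partition a" "is_partition b"
  shows "\<exists>lam. is_partition lam \<and> abacus_of lam 0 = interleave a (- k) b k"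
proof -
  define M where "M = int (length a) + int (length b) + \<bar>k\<bar>"
  have M: "int (length a) \<le> M + - k" "int (length b) \<le> M + k" "int (nat (2 * M)) = 2 * M"
    unfolding M_def by (arith, arith, simp)
  have "nat (M + - k) + nat (M + k) = nat (2 * M)" using M(1,2) by simp
  then have "finite {z \<in> interleave a (- k) b k. - int (nat (2 * M)) \<le> z}"
    "card {z \<in> interleave a (- k) b k. - int (nat (2 * M)) \<le> z} = nat (2 * M)"
    using card_interleave_ge[OF assms M(1,2)] unfolding M(3) by simp_all
  moreover have "{z. z < - int (nat (2 * M))} \<subseteq> interleave a (- k) b k"
    using mem_interleave_below[of _ "- k" a k b] M by auto
  ultimately show ?thesis using ex_partition_abacus_of by blast
qed

section \<open>The \<open>2\<close>-quotient\<close>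

lemma mem_even_halves: "y \<in> {x div 2 | x. x \<in> B \<and> even x} \<longleftrightarrow> 2 * y \<in> (B :: nat set)"
  by force

lemma mem_odd_halves: "y \<in> {(x - 1) div 2 | x. x \<in> B \<and> odd x} \<longleftrightarrow> 2 * y + 1 \<in> (B :: nat set)"
  by (auto elim!: oddE) force

lemma card_even_halves_add_card_odd_halves:
  fixes B :: "nat set"
  assumes "finite B"
  shows "card {x div 2 | x. x \<in> B \<and> even x} + card {(x - 1) div 2 | x. x \<in> B \<and> odd x} = card B"
proof -
  define E where "E = {x div 2 | x. x \<in> B \<and> even x}"
  define Od where "Od = {(x - 1) div 2 | x. x \<in> B \<and> odd x}"
  have "2 * y \<noteq> 2 * y' + (1::nat)" for y y' by presburger
  then have disjoint: "(\<lambda>y. 2 * y) ` E \<inter> (\<lambda>y. 2 * y + 1) ` Od = {}" by blast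
  have memE: "y \<in> E \<longleftrightarrow> 2 * y \<in> B" and memOd: "y \<in> Od \<longleftrightarrow> 2 * y + 1 \<in> B" for y
    unfolding E_def Od_def by (rule mem_even_halves mem_odd_halves)+
  have "B = (\<lambda>y. 2 * y) ` E \<union> (\<lambda>y. 2 * y + 1) ` Od"
  proof (intro set_eqI iffI)
    fix x assume "x \<in> B"
    show "x \<in> (\<lambda>y. 2 * y) ` E \<union> (\<lambda>y. 2 * y + 1) ` Od"
    proof (cases "even x")
      case True
      then have "x = 2 * (x div 2)" "x div 2 \<in> E" using memE[of "x div 2"] \<open>x \<in> B\<close> by auto
      then show ?thesis by (metis UnI1 image_eqI)
    next
      case False
      then have "x = 2 * (x div 2) + 1" "x div 2 \<in> Od" using memOd[of "x div 2"] \<open>x \<in> B\<close> by auto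
      then show ?thesis by (metis UnI2 image_eqI)
    qed
  qed (auto simp: memE memOd)
  moreover have "finite E" "finite Od" unfolding E_def Od_def using assms by auto
  ultimately have "card B = card ((\<lambda>y. 2 * y) ` E) + card ((\<lambda>y. 2 * y + 1) ` Od)"
    using disjoint by (simp add: card_Un_disjoint)
  also have "\<dots> = card E + card Od" by (simp add: card_image inj_on_def)
  finally show ?thesis unfolding E_def Od_def by simp
qed

text \<open>Since \<open>quot2\<close> uses a \<open>\<beta>\<close>-set with an odd number \<open>2L + 1\<close> of beads, its even
  beads sit at odd positions of the charge-\<open>0\<close> abacus. The two runners then carry charges
  \<open>-k\<close> and \<open>k\<close>, where \<open>k\<close> is \<open>L + 1\<close> minus the number of even beads.\<close>

definition quot2_charge :: "nat list \<Rightarrow> int" where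
  "quot2_charge lam = int (length lam) + 1
     - int (card {x div 2 | x. x \<in> beta (2 * length lam + 1) lam \<and> even x})"

lemma quot2_partitions:
  "is_partition (fst (quot2 lam))" "is_partition (snd (quot2 lam))"
  unfolding quot2_def Let_def by (simp_all add: partition_of_beta_spec)

lemma abacus_of_quot2:
  assumes "is_partition lam"
  shows "abacus_of lam 0 = interleave (fst (quot2 lam)) (- quot2_charge lam) (snd (quot2 lam)) (quot2_charge lam)"
proof -
  define L where "L = length lam"
  define B where "B = beta (2 * L + 1) lam"
  define E where "E = {x div 2 | x. x \<in> B \<and> even x}"
  define Od where "Od = {(x - 1) div 2 | x. x \<in> B \<and> odd x}"
  define k where "k = quot2_charge lam"
  have fin: "finite E" "finite Od" unfolding E_def Od_def B_def by auto
  have memE: "y \<in> E \<longleftrightarrow> 2 * y \<in> B" and memOd: "y \<in> Od \<longleftrightarrow> 2 * y + 1 \<in> B" for y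
    unfolding E_def Od_def by (rule mem_even_halves mem_odd_halves)+
  have quot: "quot2 lam = (partition_of_beta E, partition_of_beta Od)"
    unfolding quot2_def E_def Od_def B_def L_def Let_def ..
  have k: "int (card E) = int L + 1 - k" "int (card Od) = int L + k"
    using card_even_halves_add_card_odd_halves[of B] card_beta[OF assms, of "2 * L + 1"]
    unfolding k_def quot2_charge_def E_def Od_def B_def L_def by simp_all
  have lam: "z \<in> abacus_of lam 0 \<longleftrightarrow> z < - int (2 * L + 1) \<or> (- int (2 * L + 1) \<le> z \<and> nat (z + int (2 * L + 1)) \<in> B)" for z
    using mem_abacus_of_beta[of lam "2 * L + 1" z 0] unfolding B_def L_def by simp
  have runner_E: "w \<in> abacus_of (partition_of_beta E) (- k)
      \<longleftrightarrow> w < - int L - 1 \<or> (- int L - 1 \<le> w \<and> 2 * nat (w + int L + 1) \<in> B)" for w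
    using mem_abacus_of_partition_of_beta[OF fin(1), of w "- k"] k(1) unfolding memE
    by (auto simp: add.assoc)
  have runner_Od: "w \<in> abacus_of (partition_of_beta Od) k
      \<longleftrightarrow> w < - int L \<or> (- int L \<le> w \<and> 2 * nat (w + int L) + 1 \<in> B)" for w
    using mem_abacus_of_partition_of_beta[OF fin(2), of w k] k(2) unfolding memOd by auto
  have "z \<in> abacus_of lam 0 \<longleftrightarrow> z \<in> interleave (partition_of_beta E) (- k) (partition_of_beta Od) k" for z
  proof (cases "even z")
    case True
    then obtain w where w: "z = 2 * w" by (auto elim: evenE)
    have "nat (2 * w + int (2 * L + 1)) = 2 * nat (w + int L) + 1" if "- int L \<le> w"
      using that by (simp add: nat_eq_iff)
    then show ?thesis unfolding w lam even_mem_interleave runner_Od by auto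
  next
    case False
    then obtain w where w: "z = 2 * w + 1" by (auto elim: oddE)
    have "nat (2 * w + 1 + int (2 * L + 1)) = 2 * nat (w + int L + 1)" if "- int L - 1 \<le> w"
      using that by (simp add: nat_eq_iff)
    then show ?thesis unfolding w lam odd_mem_interleave runner_E by auto
  qed
  then show ?thesis using quot k_def by auto
qed

section \<open>Dominoes and the \<open>2\<close>-core\<close>

lemma remove_domino_abacus:
  assumes "remove_domino lam kap"
  obtains z where "z \<in> abacus_of lam 0" "z - 2 \<notin> abacus_of lam 0"
    "abacus_of kap 0 = insert (z - 2) (abacus_of lam 0 - {z})"
proof -
  obtain N x where N: "length lam \<le> N" "length kap \<le> N" and x: "x \<in> beta N lam" "2 \<le> x"
    "x - 2 \<notin> beta N lam" "beta N kap = insert (x - 2) (beta N lam - {x})"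
    using assms unfolding remove_domino_def by blast
  define z where "z = int x - int N"
  have lam: "u \<in> abacus_of lam 0 \<longleftrightarrow> u < - int N \<or> (- int N \<le> u \<and> nat (u + int N) \<in> beta N lam)" for u
    using mem_abacus_of_beta[OF N(1), of u 0] by simp
  have kap: "u \<in> abacus_of kap 0 \<longleftrightarrow> u < - int N \<or> (- int N \<le> u \<and> nat (u + int N) \<in> beta N kap)" for u
    using mem_abacus_of_beta[OF N(2), of u 0] by simp
  have "nat (z - 2 + int N) = x - 2" using x(2) by (simp add: z_def)
  then have "z \<in> abacus_of lam 0" "z - 2 \<notin> abacus_of lam 0"
    using lam[of z] lam[of "z - 2"] x(1-3) by (simp_all add: z_def)
  moreover have "abacus_of kap 0 = insert (z - 2) (abacus_of lam 0 - {z})"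
  proof (intro set_eqI)
    fix u
    show "u \<in> abacus_of kap 0 \<longleftrightarrow> u \<in> insert (z - 2) (abacus_of lam 0 - {z})"
    proof (cases "u < - int N")
      case False
      then have "nat (u + int N) = x - 2 \<longleftrightarrow> u = z - 2" "nat (u + int N) = x \<longleftrightarrow> u = z"
        using x(2) by (auto simp: z_def)
      then show ?thesis using kap[of u] lam[of u] x(4) False by auto
    qed (use kap lam x(2) z_def in auto)
  qed
  ultimately show ?thesis using that by blast
qed

lemma card_even_move_bead:
  fixes X :: "int set"
  assumes "z \<in> X" "z - 2 \<notin> X" "- 2 * M \<le> z - 2" "finite {w. 2 * w \<in> X \<and> - M \<le> w}"
  shows "card {w. 2 * w \<in> insert (z - 2) (X - {z}) \<and> - M \<le> w} = card {w. 2 * w \<in> X \<and> - M \<le> w}"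
proof (cases "even z")
  case False
  then have "2 * w \<noteq> z" "2 * w \<noteq> z - 2" for w by presburger+
  then have "{w. 2 * w \<in> insert (z - 2) (X - {z}) \<and> - M \<le> w} = {w. 2 * w \<in> X \<and> - M \<le> w}" by auto
  then show ?thesis by simp
next
  case True
  then obtain v where v: "z = 2 * v" by (auto elim: evenE)
  define S where "S = {w. 2 * w \<in> X \<and> - M \<le> w}"
  have "{w. 2 * w \<in> insert (z - 2) (X - {z}) \<and> - M \<le> w} = insert (v - 1) (S - {v})"
    using assms(3) v unfolding S_def by auto
  moreover have "v \<in> S" "v - 1 \<notin> S - {v}" using assms(1-3) v unfolding S_def by auto
  ultimately show ?thesis
    using assms(4) card_Suc_Diff1[of S v] unfolding S_def[symmetric] by simp
qed

lemma remove_domino_sum_list: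
  assumes "remove_domino lam kap"
  shows "sum_list kap + 2 = sum_list lam"
proof -
  obtain N x where N: "length lam \<le> N" "length kap \<le> N" and x: "x \<in> beta N lam" "2 \<le> x"
    "x - 2 \<notin> beta N lam" "beta N kap = insert (x - 2) (beta N lam - {x})"
    using assms unfolding remove_domino_def by blast
  have part: "is_partition lam" "is_partition kap" using assms unfolding remove_domino_def by auto
  have "\<Sum>(beta N kap) + x = \<Sum>(beta N lam) + (x - 2)"
    using x by (simp add: sum.remove[of "beta N lam" x])
  then show ?thesis using x(2) sum_beta[OF part(1) N(1)] sum_beta[OF part(2) N(2)] by simp
qed

text \<open>The charge of the even runner is read off from the number of its beads above some
  \<open>-M\<close>, which moving a bead two steps down does not change.\<close>

lemma remove_domino_quot2_charge:
  assumes "remove_domino lam kap"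
  shows "quot2_charge kap = quot2_charge lam"
proof -
  have partitions: "is_partition lam" "is_partition kap" using assms unfolding remove_domino_def by auto
  obtain z where z: "z \<in> abacus_of lam 0" "z - 2 \<notin> abacus_of lam 0"
    "abacus_of kap 0 = insert (z - 2) (abacus_of lam 0 - {z})"
    using remove_domino_abacus[OF assms] by blast
  define b where "b = snd (quot2 lam)"
  define b' where "b' = snd (quot2 kap)"
  define M where "M = int (length b) + int (length b') + \<bar>quot2_charge lam\<bar> + \<bar>quot2_charge kap\<bar> + \<bar>z\<bar> + 2"
  have even_lam: "{w. 2 * w \<in> abacus_of lam 0 \<and> - M \<le> w} = {w \<in> abacus_of b (quot2_charge lam). - M \<le> w}"
    unfolding abacus_of_quot2[OF partitions(1)] even_mem_interleave b_def by simp
  have even_kap: "{w. 2 * w \<in> abacus_of kap 0 \<and> - M \<le> w} = {w \<in> abacus_of b' (quot2_charge kap). - M \<le> w}"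
    unfolding abacus_of_quot2[OF partitions(2)] even_mem_interleave b'_def by simp
  have "int (length b) \<le> M + quot2_charge lam" "int (length b') \<le> M + quot2_charge kap"
    unfolding M_def by arith+
  note count = card_abacus_of_ge[OF quot2_partitions(2) this(1)[unfolded b_def]]
    card_abacus_of_ge[OF quot2_partitions(2) this(2)[unfolded b'_def]]
  have "- 2 * M \<le> z - 2" unfolding M_def by arith
  then have "card {w. 2 * w \<in> abacus_of kap 0 \<and> - M \<le> w} = card {w. 2 * w \<in> abacus_of lam 0 \<and> - M \<le> w}"
    unfolding z(3) using z(1,2) count(1) even_lam b_def by (intro card_even_move_bead) auto
  then have "nat (M + quot2_charge kap) = nat (M + quot2_charge lam)"
    using count even_lam even_kap b_def b'_def by simp
  then show ?thesis unfolding M_def by simp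
qed

lemma rtranclp_remove_domino_quot2_charge:
  "remove_domino\<^sup>*\<^sup>* lam kap \<Longrightarrow> quot2_charge kap = quot2_charge lam"
  by (induction rule: rtranclp_induct) (auto dest: remove_domino_quot2_charge)

definition down2_closed :: "int set \<Rightarrow> bool" where
  "down2_closed X \<longleftrightarrow> (\<forall>z\<in>X. z - 2 \<in> X)"

lemma down2_closed_no_domino:
  "down2_closed (abacus_of lam 0) \<Longrightarrow> \<not> remove_domino lam kap"
  by (metis down2_closed_def remove_domino_abacus)

lemma down2_closed_if_no_domino:
  assumes "is_partition lam" "\<nexists>kap. remove_domino lam kap"
  shows "down2_closed (abacus_of lam 0)"
  unfolding down2_closed_def
proof
  fix z assume z: "z \<in> abacus_of lam 0"
  define N where "N = length lam"
  have mem: "u \<in> abacus_of lam 0 \<longleftrightarrow> u < - int N \<or> (- int N \<le> u \<and> nat (u + int N) \<in> beta N lam)" for u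
    using mem_abacus_of_beta[of lam N u 0] N_def by simp
  show "z - 2 \<in> abacus_of lam 0"
  proof (rule ccontr)
    assume z2: "z - 2 \<notin> abacus_of lam 0"
    define x where "x = nat (z + int N)"
    have "- int N \<le> z - 2" using mem[of "z - 2"] z2 by auto
    then have "nat (z - 2 + int N) = x - 2" "2 \<le> x" unfolding x_def by auto
    then have x: "x \<in> beta N lam" "2 \<le> x" "x - 2 \<notin> beta N lam"
      using mem[of z] mem[of "z - 2"] z z2 \<open>- int N \<le> z - 2\<close> unfolding x_def by auto
    have "0 < N" using x(1) card_beta[OF assms(1), of N] card_gt_0_iff[of "beta N lam"] by auto
    then have "card (insert (x - 2) (beta N lam - {x})) = N"
      using x card_beta[OF assms(1), of N] by (simp add: card_Diff_singleton_if)
    then obtain kap where "is_partition kap" "length kap \<le> N"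
      "beta N kap = insert (x - 2) (beta N lam - {x})"
      using ex_partition_beta by (metis finite_Diff finite_beta finite_insert)
    then have "remove_domino lam kap"
      unfolding remove_domino_def using assms(1) x N_def by blast
    then show False using assms(2) by blast
  qed
qed

lemma down2_closed_quot2:
  assumes "is_partition lam" "down2_closed (abacus_of lam 0)"
  shows "quot2 lam = ([], [])"
proof -
  define I where "I = interleave (fst (quot2 lam)) (- quot2_charge lam) (snd (quot2 lam)) (quot2_charge lam)"
  have closed: "z - 2 \<in> I" if "z \<in> I" for z
    using assms(2) that unfolding down2_closed_def abacus_of_quot2[OF assms(1)] I_def by blast
  have "fst (quot2 lam) = []"
  proof (rule abacus_of_down_closed_Nil[OF quot2_partitions(1)])
    fix w assume "w \<in> abacus_of (fst (quot2 lam)) (- quot2_charge lam)"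
    then have "2 * w + 1 \<in> I" unfolding I_def odd_mem_interleave .
    then have "2 * (w - 1) + 1 \<in> I" using closed[of "2 * w + 1"] by (simp add: algebra_simps)
    then show "w - 1 \<in> abacus_of (fst (quot2 lam)) (- quot2_charge lam)"
      unfolding I_def odd_mem_interleave .
  qed
  moreover have "snd (quot2 lam) = []"
  proof (rule abacus_of_down_closed_Nil[OF quot2_partitions(2)])
    fix w assume "w \<in> abacus_of (snd (quot2 lam)) (quot2_charge lam)"
    then have "2 * w \<in> I" unfolding I_def even_mem_interleave .
    then have "2 * (w - 1) \<in> I" using closed[of "2 * w"] by (simp add: algebra_simps)
    then show "w - 1 \<in> abacus_of (snd (quot2 lam)) (quot2_charge lam)"
      unfolding I_def even_mem_interleave .
  qed
  ultimately show ?thesis by (simp add: prod_eq_iff)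
qed

lemma staircase_partition: "is_partition (staircase t)"
  and length_staircase: "length (staircase t) = t"
  unfolding is_partition_def staircase_def by (simp_all add: sorted_wrt_rev del: upt_Suc)

lemma part_staircase: "1 \<le> i \<Longrightarrow> i \<le> t \<Longrightarrow> part (staircase t) i = t + 1 - i"
  unfolding part_def staircase_def by (simp add: rev_nth del: upt_Suc)

lemma mem_abacus_of_staircase:
  "z \<in> abacus_of (staircase t) 0 \<longleftrightarrow> z \<le> - int t - 1 \<or> (z \<le> int t - 1 \<and> even (z + int t + 1))"
proof
  assume "z \<in> abacus_of (staircase t) 0"
  then obtain i where i: "1 \<le> i" "z = bead (staircase t) 0 i" by (auto simp: abacus_of_def)
  show "z \<le> - int t - 1 \<or> (z \<le> int t - 1 \<and> even (z + int t + 1))"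
  proof (cases "i \<le> t")
    case True
    then have "z + int t + 1 = 2 * (int t + 1 - int i)" "z \<le> int t - 1"
      using i part_staircase[OF i(1) True] by (auto simp: bead_def)
    then show ?thesis by simp
  next
    case False
    then show ?thesis using i bead_beyond_length[of "staircase t" i 0] by (simp add: length_staircase)
  qed
next
  assume z: "z \<le> - int t - 1 \<or> (z \<le> int t - 1 \<and> even (z + int t + 1))"
  show "z \<in> abacus_of (staircase t) 0"
  proof (cases "z \<le> - int t - 1")
    case True
    then show ?thesis using mem_abacus_of_below[of z 0 "staircase t"] by (simp add: length_staircase)
  next
    case False
    then have "even (z + int t + 1)" using z by simp
    then obtain m where m: "z + int t + 1 = 2 * m" by (rule evenE)
    define i where "i = nat (int t + 1 - m)"
    have i: "1 \<le> i" "i \<le> t" "z = int t + 1 - 2 * int i" using z False m unfolding i_def by auto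
    then have "z = bead (staircase t) 0 i" by (simp add: bead_def part_staircase)
    then show ?thesis using i(1) by (auto simp: abacus_of_def)
  qed
qed

lemma staircase_down2_closed: "down2_closed (abacus_of (staircase t) 0)"
  unfolding down2_closed_def
proof
  fix z assume "z \<in> abacus_of (staircase t) 0"
  moreover have "even (z - 2 + int t + 1) \<longleftrightarrow> even (z + int t + 1)" by presburger
  ultimately show "z - 2 \<in> abacus_of (staircase t) 0"
    unfolding mem_abacus_of_staircase by linarith
qed

definition staircase_charge :: "nat \<Rightarrow> int" where
  "staircase_charge t = (if even t then - int (t div 2) else int ((t + 1) div 2))"

lemma abacus_of_staircase:
  "abacus_of (staircase t) 0 = interleave [] (- staircase_charge t) [] (staircase_charge t)"
proof (intro set_eqI)
  fix z
  show "z \<in> abacus_of (staircase t) 0 \<longleftrightarrow> z \<in> interleave [] (- staircase_charge t) [] (staircase_charge t)"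
  proof (cases "even z")
    case True
    then obtain w where w: "z = 2 * w" by (auto elim: evenE)
    show ?thesis
      unfolding w mem_abacus_of_staircase even_mem_interleave abacus_of_Nil staircase_charge_def
      by (cases "even t") (auto elim!: evenE oddE)
  next
    case False
    then obtain w where w: "z = 2 * w + 1" by (auto elim: oddE)
    show ?thesis
      unfolding w mem_abacus_of_staircase odd_mem_interleave abacus_of_Nil staircase_charge_def
      by (cases "even t") (auto elim!: evenE oddE)
  qed
qed

lemma quot2_charge_staircase: "quot2_charge (staircase t) = staircase_charge t"
proof -
  have "quot2 (staircase t) = ([], [])"
    using down2_closed_quot2 staircase_partition staircase_down2_closed by blast
  then have "abacus_of (staircase t) 0 = interleave [] (- quot2_charge (staircase t)) [] (quot2_charge (staircase t))"
    using abacus_of_quot2[OF staircase_partition] by simp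
  moreover have "is_partition []" by (simp add: is_partition_def)
  ultimately show ?thesis unfolding abacus_of_staircase using interleave_inj(4) by metis
qed

lemma rtranclp_remove_domino_staircase:
  assumes "is_partition lam" "quot2_charge lam = staircase_charge t"
  shows "remove_domino\<^sup>*\<^sup>* lam (staircase t)"
  using assms
proof (induction "sum_list lam" arbitrary: lam rule: less_induct)
  case less
  show ?case
  proof (cases "\<exists>kap. remove_domino lam kap")
    case True
    then obtain kap where kap: "remove_domino lam kap" by blast
    then have "is_partition kap" "sum_list kap < sum_list lam" "quot2_charge kap = staircase_charge t"
      using remove_domino_sum_list[OF kap] remove_domino_quot2_charge[OF kap] less.prems
      unfolding remove_domino_def by auto
    then show ?thesis using less.hyps converse_rtranclp_into_rtranclp[of remove_domino, OF kap] by blast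
  next
    case False
    then have "quot2 lam = ([], [])"
      using down2_closed_quot2 down2_closed_if_no_domino less.prems(1) by blast
    then have "abacus_of lam 0 = abacus_of (staircase t) 0"
      unfolding abacus_of_quot2[OF less.prems(1)] abacus_of_staircase less.prems(2) by simp
    then have "lam = staircase t" using abacus_of_inj(1)[OF less.prems(1) staircase_partition] by blast
    then show ?thesis by simp
  qed
qed

lemma has_2core_staircase_iff:
  assumes "is_partition lam"
  shows "has_2core lam (staircase t) \<longleftrightarrow> quot2_charge lam = staircase_charge t"
  using rtranclp_remove_domino_quot2_charge quot2_charge_staircase
    rtranclp_remove_domino_staircase[OF assms] down2_closed_no_domino[OF staircase_down2_closed]
  unfolding has_2core_def by metis

lemma abacus_of_shift_quot2_bar:
  assumes "is_partition lam" "quot2_charge lam = staircase_charge t"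
  shows "abacus_of lam (int t + 2) = interleave (fst (quot2_bar t lam)) (int t + 1) (snd (quot2_bar t lam)) 1"
proof -
  define k where "k = quot2_charge lam"
  have lam: "abacus_of lam (int t + 2)
      = (\<lambda>z. z + (int t + 2)) ` interleave (fst (quot2 lam)) (- k) (snd (quot2 lam)) k"
    using abacus_of_shift[of "int t + 2" lam 0] unfolding abacus_of_quot2[OF assms(1)] k_def by simp
  show ?thesis
  proof (cases "even t")
    case True
    then obtain s where s: "t = 2 * s" by (auto elim: evenE)
    have "k = - int s" using assms(2) True unfolding k_def staircase_charge_def s by simp
    have "abacus_of lam (int t + 2)
        = (\<lambda>z. z + 2 * (int s + 1)) ` interleave (fst (quot2 lam)) (- k) (snd (quot2 lam)) k"
      using lam s by (simp add: algebra_simps)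
    then show ?thesis
      unfolding interleave_shift_even \<open>k = - int s\<close> quot2_bar_def using True s by simp
  next
    case False
    then obtain s where s: "t = 2 * s + 1" by (auto elim: oddE)
    have "k = int s + 1" using assms(2) False unfolding k_def staircase_charge_def s by simp
    have "abacus_of lam (int t + 2)
        = (\<lambda>z. z + 2 * (int s + 1)) ` (\<lambda>z. z + 1) ` interleave (fst (quot2 lam)) (- k) (snd (quot2 lam)) k"
      using lam s by (simp add: image_image algebra_simps)
    then show ?thesis
      unfolding interleave_shift_odd interleave_shift_even \<open>k = int s + 1\<close> quot2_bar_def
      using False s by (simp add: algebra_simps)
  qed
qed

lemma quot2_bar_eq_iff: "quot2_bar t lam = mu \<longleftrightarrow> quot2 lam = (if even t then mu else prod.swap mu)"
  by (auto simp: quot2_bar_def)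

lemma Phi_spec:
  assumes "is_bipartition mu"
  shows "is_partition (Phi t mu)" "has_2core (Phi t mu) (staircase t)" "quot2_bar t (Phi t mu) = mu"
proof -
  define q where "q = (if even t then mu else prod.swap mu)"
  have q: "is_partition (fst q)" "is_partition (snd q)"
    using assms unfolding q_def is_bipartition_def by auto
  obtain lam where lam: "is_partition lam"
    "abacus_of lam 0 = interleave (fst q) (- staircase_charge t) (snd q) (staircase_charge t)"
    using ex_partition_abacus_of_interleave[OF q] by blast
  then have "quot2 lam = q" "quot2_charge lam = staircase_charge t"
    using interleave_inj[OF quot2_partitions q] abacus_of_quot2[OF lam(1)] by (simp_all add: prod_eq_iff)
  then have lam_spec: "is_partition lam \<and> has_2core lam (staircase t) \<and> quot2_bar t lam = mu"
    using lam(1) has_2core_staircase_iff quot2_bar_eq_iff q_def by blast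
  have unique: "lam' = lam" if "is_partition lam' \<and> has_2core lam' (staircase t) \<and> quot2_bar t lam' = mu" for lam'
  proof -
    have "quot2 lam' = quot2 lam" "quot2_charge lam' = quot2_charge lam"
      using that lam_spec has_2core_staircase_iff quot2_bar_eq_iff by metis+
    then have "abacus_of lam' 0 = abacus_of lam 0"
      using abacus_of_quot2 that lam_spec by metis
    then show ?thesis using abacus_of_inj(1) that lam_spec by blast
  qed
  have "is_partition (Phi t mu) \<and> has_2core (Phi t mu) (staircase t) \<and> quot2_bar t (Phi t mu) = mu"
    unfolding Phi_def using lam_spec unique by (rule theI)
  then show "is_partition (Phi t mu)" "has_2core (Phi t mu) (staircase t)" "quot2_bar t (Phi t mu) = mu"
    by blast+
qed

theorem lemma7p2:
  fixes e :: int and t :: nat and mu :: "nat list \<times> nat list"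
  assumes "e > 1" and "odd e" and "is_bipartition mu"
  shows "\<forall>j\<ge>1. abacus_part (abacus_e e mu (int t + (1 - e) div 2, 0)) j = part (Phi t mu) j"
proof (intro allI impI)
  fix j :: nat assume "1 \<le> j"
  have "quot2_charge (Phi t mu) = staircase_charge t"
    using Phi_spec[OF assms(3)] has_2core_staircase_iff by blast
  then have "abacus_of (Phi t mu) (int t + 2) = interleave (fst mu) (int t + 1) (snd mu) 1"
    using abacus_of_shift_quot2_bar Phi_spec[OF assms(3)] by metis
  moreover have "(1 - e) div 2 + (e + 1) div 2 = 1"
    using assms(2) by (auto elim!: oddE)
  ultimately have "abacus_e e mu (int t + (1 - e) div 2, 0) = abacus_of (Phi t mu) (int t + 2)"
    using abacus_e_eq_interleave[OF assms(2)] by (simp add: add.assoc)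
  then show "abacus_part (abacus_e e mu (int t + (1 - e) div 2, 0)) j = part (Phi t mu) j"
    using abacus_part_abacus_of[OF Phi_spec(1)[OF assms(3)] \<open>1 \<le> j\<close>] by simp
qed

end
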